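(* ($I\Sigma_1$) Let $X\subseteq\mathbb{N}$ be finite, $\omega^{n+1}$-large and $\omega^3$-sparse, and let $c\in\mathbb{N}$ satisfy $4^{c^2}\le\min X$. Then: (1) for every finite $\bar X\subseteq\mathbb{N}$ with $|\bar X|\le c$ and $\max\bar X<\min X$, and every coloring $P:[\bar X\cup X]^2\to\{0,\dots,c-1\}$, there is an $\omega^n$-large $Y\subseteq X$ such that $P(x,y)=P(x,y')$ for all $x\in\bar X$ and $y,y'\in Y$; (2) for every finite $\bar X\subseteq\mathbb{N}$ with $|\bar X|\le c$ and $\max X<\min\bar X$, and every coloring $P:[X\cup\bar X]^2\to\{0,\dots,c-1\}$, there is an $\omega^n$-large $Y\subseteq X$ such that $P(y,x)=P(y',x)$ for all $x\in\bar X$ and $y,y'\in Y$.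
   Context: $\alpha$-largeness for $\alpha<\omega^\omega$: writing ordinals in Cantor normal form, $0[m]=0$, $(\beta+1)[m]=\beta$, $(\beta+\omega^n)[m]=\beta+\omega^{n-1}\cdot m$ for $n\ge1$; a finite $\{x_0<\dots<x_{\ell-1}\}$ is $\alpha$-large if $\alpha[x_0]\cdots[x_{\ell-1}]=0$. $X$ is \emph{$\alpha$-sparse} if $\min X>3$ and for all $x<y$ in $X$ the interval $[x,y)$ is $\alpha$-large. *)

theory Defs
  imports Main
begin

text \<open>Ordinals below omega^omega in Cantor normal form
  omega^e1 + ... + omega^ek, represented by the list [e1,...,ek] of exponents
  (nonincreasing). The empty list is 0.\<close>

type_synonym ord_cnf = "nat list"

definition omega_pow :: "nat \<Rightarrow> ord_cnf" where
  "omega_pow n = [n]"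

text \<open>Fundamental sequence: 0[m] = 0, (b+1)[m] = b,
  (b + omega^(n+1))[m] = b + omega^n * m.\<close>
fun fund :: "ord_cnf \<Rightarrow> nat \<Rightarrow> ord_cnf" where
  "fund a m = (if a = [] then [] else
     (case last a of 0 \<Rightarrow> butlast a
                | Suc k \<Rightarrow> butlast a @ replicate m k))"

definition large :: "ord_cnf \<Rightarrow> nat set \<Rightarrow> bool" where
  "large a X \<longleftrightarrow> finite X \<and> foldl fund a (sorted_list_of_set X) = []"

definition sparse :: "ord_cnf \<Rightarrow> nat set \<Rightarrow> bool" where
  "sparse a X \<longleftrightarrow> (\<forall>x\<in>X. 3 < x) \<and>
     (\<forall>x\<in>X. \<forall>y\<in>X. x < y \<longrightarrow> large a {x..<y})"

end

theory Submission
  imports Defs "HOL-Library.Multiset" "HOL-Library.FuncSet"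
begin

text \<open>An ordinal below \<open>\<omega>\<^sup>\<omega>\<close> in Cantor normal form is a multiset of exponents, and
  a step of the fundamental sequence replaces a least exponent \<open>e\<close> by \<open>x\<close> copies of \<open>e - 1\<close>.
  Say that \<open>D\<close> lies below \<open>G\<close> with parameter \<open>m\<close> if \<open>D\<close> arises from \<open>G\<close> by repeatedly
  replacing some exponent \<open>g\<close> by at most \<open>m\<close> copies of \<open>g - 1\<close>. The central lemma splits
  natural sums: if \<open>A + B\<close> lies below \<open>G\<close> and a set is \<open>G\<close>-large, then under any
  2-colouring the first colour class is \<open>A\<close>-large or the second is \<open>B\<close>-large. Iterated,
  this gives a pigeonhole principle: an \<open>\<omega>\<^sup>n\<cdot>k\<close>-large set coloured with at most \<open>k\<close>
  colours has an \<open>\<omega>\<^sup>n\<close>-large colour class. An \<open>\<omega>^(n+1)\<close>-large set \<open>X\<close> is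
  \<open>\<omega>\<^sup>n\<cdot>min X\<close>-large after its least element, and colouring \<open>y \<in> X\<close> by the function
  \<open>x \<mapsto> P x y\<close> on \<open>Xb\<close> uses at most \<open>c^c \<le> 4^(c\<^sup>2) \<le> min X\<close> colours.\<close>

definition mfund :: "nat multiset \<Rightarrow> nat \<Rightarrow> nat multiset" where
  "mfund M x = (if M = {#} then {#} else
     M - {#Min_mset M#} +
     (if Min_mset M = 0 then {#} else replicate_mset x (Min_mset M - 1)))"

definition mlarge :: "nat multiset \<Rightarrow> nat list \<Rightarrow> bool" where
  "mlarge M xs \<longleftrightarrow> foldl mfund M xs = {#}"

lemma mfund_empty [simp]: "mfund {#} x = {#}"
  by (simp add: mfund_def)

lemma mlarge_empty [simp]: "mlarge {#} xs"
proof -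
  have "foldl mfund {#} xs = {#}" by (induction xs) auto
  then show ?thesis by (simp add: mlarge_def)
qed

lemma mlarge_Nil [simp]: "mlarge M [] \<longleftrightarrow> M = {#}"
  by (simp add: mlarge_def)

lemma mlarge_Cons [simp]: "mlarge M (x # xs) \<longleftrightarrow> mlarge (mfund M x) xs"
  by (simp add: mlarge_def)

lemma mlarge_nonempty: "mlarge M xs \<Longrightarrow> M \<noteq> {#} \<Longrightarrow> xs \<noteq> []"
  by (cases xs) auto

lemma mfund_eq:
  assumes "e \<in># M" and "\<And>y. y \<in># M \<Longrightarrow> e \<le> y"
  shows "mfund M x = M - {#e#} + (if e = 0 then {#} else replicate_mset x (e - 1))"
proof -
  have "Min_mset M = e" using assms by (intro Min_eqI) auto
  then show ?thesis using assms(1) by (auto simp: mfund_def)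
qed

text \<open>The guard \<open>k = 0 \<or> 0 < g\<close> matters because \<open>0 - 1 = 0\<close>: an exponent \<open>0\<close> may only
  be deleted.\<close>

definition mstep :: "nat \<Rightarrow> nat multiset \<Rightarrow> nat multiset \<Rightarrow> bool" where
  "mstep m D G \<longleftrightarrow> (\<exists>g k. g \<in># G \<and> k \<le> m \<and> (k = 0 \<or> 0 < g) \<and>
     D = G - {#g#} + replicate_mset k (g - 1))"

definition mbelow :: "nat \<Rightarrow> nat multiset \<Rightarrow> nat multiset \<Rightarrow> bool" where
  "mbelow m = (mstep m)\<^sup>*\<^sup>*"

lemma mbelow_refl [simp]: "mbelow m D D"
  by (simp add: mbelow_def)

lemma mbelow_trans [trans]: "mbelow m D E \<Longrightarrow> mbelow m E G \<Longrightarrow> mbelow m D G"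
  unfolding mbelow_def by (rule rtranclp_trans)

lemma mstep_imp_mbelow: "mstep m D G \<Longrightarrow> mbelow m D G"
  unfolding mbelow_def by (rule r_into_rtranclp)

lemma mbelow_mono:
  assumes "m \<le> m'" and "mbelow m D G"
  shows "mbelow m' D G"
proof -
  have "mstep m' D' G'" if "mstep m D' G'" for D' G'
  proof -
    from that obtain g k where "g \<in># G'" "k \<le> m" "k = 0 \<or> 0 < g"
      and "D' = G' - {#g#} + replicate_mset k (g - 1)"
      unfolding mstep_def by blast
    with assms(1) show ?thesis unfolding mstep_def by (intro exI[of _ g] exI[of _ k]) auto
  qed
  then show ?thesis using assms(2) unfolding mbelow_def by (metis rtranclp_mono predicate2I predicate2D)
qed

lemma mbelow_emptyD: "mbelow m D {#} \<Longrightarrow> D = {#}"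
  unfolding mbelow_def by (induction rule: converse_rtranclp_induct) (auto simp: mstep_def)

lemma mbelow_subset:
  assumes "D \<subseteq># G"
  shows "mbelow m D G"
proof -
  have "mbelow m D (D + E)" for E
  proof (induction E)
    case (add e E)
    have "mstep m (D + E) (D + add_mset e E)"
      unfolding mstep_def by (intro exI[of _ e] exI[of _ 0]) auto
    then show ?case using add mbelow_trans mstep_imp_mbelow by blast
  qed simp
  then show ?thesis using assms by (metis subset_mset.add_diff_inverse)
qed

lemma mbelow_add:
  assumes "mbelow m D G"
  shows "mbelow m (D + M) (G + M)"
proof -
  have "mstep m (D' + M) (G' + M)" if "mstep m D' G'" for D' G'
  proof -
    from that obtain g k where "g \<in># G'" "k \<le> m" "k = 0 \<or> 0 < g"
      and "D' = G' - {#g#} + replicate_mset k (g - 1)"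
      unfolding mstep_def by blast
    then show ?thesis unfolding mstep_def
      by (intro exI[of _ g] exI[of _ k]) (simp add: ac_simps diff_union_single_conv)
  qed
  with assms show ?thesis
    unfolding mbelow_def by (induction rule: rtranclp_induct) (auto intro: rtranclp.rtrancl_into_rtrancl)
qed

lemma mbelow_singleton:
  assumes "j \<le> i" and "1 \<le> m"
  shows "mbelow m {#j#} {#i#}"
  using assms(1)
proof (induction i rule: dec_induct)
  case (step i)
  have "mstep m {#i#} {#Suc i#}"
    unfolding mstep_def using assms(2) by (intro exI[of _ "Suc i"] exI[of _ 1]) auto
  then show ?case using step.IH mbelow_trans mstep_imp_mbelow by blast
qed simp

lemma mfund_mbelow: "mbelow x (mfund M x) M"
proof (cases "M = {#}")
  case False
  define e where "e = Min_mset M"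
  have "e \<in># M" using False by (simp add: e_def)
  then have "mstep x (mfund M x) M"
    unfolding mstep_def mfund_def e_def[symmetric] using False
    by (intro exI[of _ e] exI[of _ "if e = 0 then 0 else x"]) auto
  then show ?thesis by (rule mstep_imp_mbelow)
qed simp

lemma mstep_mfund:
  assumes "mstep m D G" and "m \<le> x"
  shows "mbelow x (mfund D x) (mfund G x)"
proof -
  obtain g k where g: "g \<in># G" and k: "k \<le> m" "k = 0 \<or> 0 < g"
    and D: "D = G - {#g#} + replicate_mset k (g - 1)"
    using assms(1) unfolding mstep_def by blast
  define e where "e = Min_mset G"
  define R where "R = (if e = 0 then {#} else replicate_mset x (e - 1))"
  have e: "e \<in># G" using g unfolding e_def by (intro Min_in_mset) auto
  have e_min: "e \<le> y" if "y \<in># G" for y using that by (simp add: e_def)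
  have fG: "mfund G x = G - {#e#} + R" unfolding R_def by (rule mfund_eq[OF e e_min])
  show ?thesis
  proof (cases "g = e")
    case True
    have "D \<subseteq># mfund G x"
      using k assms(2) unfolding D fG R_def True by (auto simp: replicate_mset_msubseteq_iff)
    then show ?thesis using mbelow_trans[OF mfund_mbelow mbelow_subset] by blast
  next
    case False
    have eD: "e \<in># G - {#g#}" and gG: "g \<in># G - {#e#}"
      using False e g by (auto simp: in_diff_count)
    have "e \<le> g - 1" if "0 < k" using False e_min[OF g] k that by simp
    then have "e \<le> y" if "y \<in># D" for y
      using that e_min unfolding D by (auto dest: in_diffD split: if_splits)
    with eD have "mfund D x = D - {#e#} + R"
      unfolding R_def D by (intro mfund_eq) simp_all
    also have "\<dots> = mfund G x - {#g#} + replicate_mset k (g - 1)"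
    proof -
      have "D - {#e#} = G - {#g#} - {#e#} + replicate_mset k (g - 1)"
        using diff_union_single_conv[OF eD, of "replicate_mset k (g - 1)"]
        unfolding D by (simp add: add.commute)
      moreover have "mfund G x - {#g#} = G - {#e#} - {#g#} + R"
        using diff_union_single_conv[OF gG, of R] unfolding fG by (simp add: add.commute)
      ultimately show ?thesis by (simp add: diff_right_commute ac_simps)
    qed
    finally have "mfund D x = mfund G x - {#g#} + replicate_mset k (g - 1)" .
    moreover have "g \<in># mfund G x" using gG unfolding fG by simp
    moreover have "k \<le> x" using k assms(2) by simp
    ultimately have "mstep x (mfund D x) (mfund G x)"
      unfolding mstep_def using k(2) by blast
    then show ?thesis by (rule mstep_imp_mbelow)
  qed
qed

lemma mbelow_mfund:
  assumes "mbelow m D G" and "m \<le> x"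
  shows "mbelow x (mfund D x) (mfund G x)"
  using assms(1) unfolding mbelow_def[of m]
proof (induction rule: rtranclp_induct)
  case (step E G)
  then show ?case using mstep_mfund[OF step(2) assms(2)] mbelow_trans by blast
qed simp

lemma mfund_add_left:
  assumes "A \<noteq> {#}" and "\<And>y. y \<in># B \<Longrightarrow> Min_mset A \<le> y"
  shows "mfund (A + B) x = mfund A x + B"
proof -
  define e where "e = Min_mset A"
  define R where "R = (if e = 0 then {#} else replicate_mset x (e - 1))"
  have e: "e \<in># A" and e_min: "\<And>y. y \<in># A \<Longrightarrow> e \<le> y"
    using assms(1) by (simp_all add: e_def)
  have "mfund (A + B) x = A + B - {#e#} + R"
    unfolding R_def using e e_min assms(2) by (intro mfund_eq) (auto simp: e_def)
  moreover have "mfund A x = A - {#e#} + R"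
    unfolding R_def using e e_min by (rule mfund_eq)
  moreover have "A + B - {#e#} = A - {#e#} + B"
    using diff_union_single_conv[OF e, of B] by (simp add: add.commute)
  ultimately show ?thesis by (simp add: add.assoc add.commute)
qed

text \<open>Taking the fundamental step in \<open>A\<close> although \<open>B\<close> has the smaller least exponent
  costs one extra copy in the parameter.\<close>

lemma mbelow_swap:
  assumes "A \<noteq> {#}" and "B \<noteq> {#}" and "Min_mset B < Min_mset A"
  shows "mbelow (Suc x) (mfund A x + B) (A + mfund B x)"
proof -
  define a where "a = Min_mset A"
  define b where "b = Min_mset B"
  have aA: "a \<in># A" and bB: "b \<in># B" and ba: "b < a"
    using assms by (simp_all add: a_def b_def)
  define C where "C = A - {#a#} + replicate_mset x (a - 1) + (B - {#b#})"
  have fA: "mfund A x = A - {#a#} + replicate_mset x (a - 1)"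
    using mfund_eq[OF aA, of x] ba by (simp add: a_def)
  have step: "mstep (Suc x) ({#a - 1#} + C) (A + (B - {#b#}))"
    unfolding mstep_def C_def using aA ba
    by (intro exI[of _ a] exI[of _ "Suc x"]) (simp add: ac_simps)
  have "mfund A x + B = {#b#} + C"
    using bB unfolding fA C_def by (simp add: ac_simps)
  also have "mbelow (Suc x) \<dots> ({#a - 1#} + C)"
    using mbelow_add[OF mbelow_singleton[of b "a - 1" "Suc x"]] ba by simp
  also have "mbelow (Suc x) \<dots> (A + (B - {#b#}))"
    using step by (rule mstep_imp_mbelow)
  also have "mbelow (Suc x) \<dots> (A + mfund B x)"
    using mfund_eq[OF bB, of x] by (intro mbelow_subset) (simp add: b_def)
  finally show ?thesis .
qed

lemma mbelow_mfund_add: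
  assumes "A \<noteq> {#}" and "B \<noteq> {#}" and "m \<le> x" and "mbelow m (A + B) G"
  shows "mbelow (Suc x) (mfund A x + B) (mfund G x)"
proof -
  have G: "mbelow (Suc x) (mfund (A + B) x) (mfund G x)"
    using mbelow_mfund[OF assms(4,3)] by (rule mbelow_mono[rotated]) simp
  show ?thesis
  proof (cases "Min_mset A \<le> Min_mset B")
    case True
    then have "mfund (A + B) x = mfund A x + B"
      using assms(2) by (intro mfund_add_left[OF assms(1)]) auto
    then show ?thesis using G by simp
  next
    case False
    have "Min_mset B \<le> y" if "y \<in># A" for y
    proof -
      have "Min_mset A \<le> y" using that by simp
      then show ?thesis using False by linarith
    qed
    then have "mfund (A + B) x = A + mfund B x"
      using mfund_add_left[OF assms(2), of A x] by (simp add: add.commute)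
    then have G': "mbelow (Suc x) (A + mfund B x) (mfund G x)" using G by simp
    have "mbelow (Suc x) (mfund A x + B) (A + mfund B x)"
      using mbelow_swap[OF assms(1,2)] False by simp
    then show ?thesis using G' by (rule mbelow_trans)
  qed
qed

text \<open>Elements following \<open>x\<close> are at least \<open>Suc x\<close>, which absorbs the extra cost of
  following the summand that does not own the least exponent.\<close>

lemma mlarge_partition:
  assumes "sorted_wrt (<) xs" and "\<forall>y\<in>set xs. m \<le> y"
    and "mbelow m (A + B) G" and "mlarge G xs"
  shows "mlarge A (filter P xs) \<or> mlarge B (filter (\<lambda>y. \<not> P y) xs)"
  using assms
proof (induction xs arbitrary: m A B G)
  case Nil
  then have "mbelow m (A + B) {#}" by simp
  then have "A + B = {#}" by (rule mbelow_emptyD)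
  then show ?case by simp
next
  case (Cons x xs)
  consider "A = {#}" | "B = {#}" | "A \<noteq> {#}" "B \<noteq> {#}" by blast
  then show ?case
  proof cases
    case 3
    have x: "m \<le> x" and xs: "sorted_wrt (<) xs" "\<forall>y\<in>set xs. Suc x \<le> y"
      using Cons.prems(1,2) by (auto simp: Suc_le_eq)
    have G: "mlarge (mfund G x) xs" using Cons.prems(4) by simp
    show ?thesis
    proof (cases "P x")
      case True
      have "mbelow (Suc x) (mfund A x + B) (mfund G x)"
        by (rule mbelow_mfund_add[OF 3 x Cons.prems(3)])
      from Cons.IH[OF xs this G] show ?thesis using True by simp
    next
      case False
      have "mbelow m (B + A) G" using Cons.prems(3) by (simp add: add.commute)
      from mbelow_mfund_add[OF 3(2,1) x this]
      have "mbelow (Suc x) (A + mfund B x) (mfund G x)" by (simp add: add.commute)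
      from Cons.IH[OF xs this G] show ?thesis using False by simp
    qed
  qed simp_all
qed

lemma mlarge_pigeonhole:
  assumes "sorted_wrt (<) xs" and "mlarge (replicate_mset (Suc k) n) xs"
    and "card (f ` set xs) \<le> Suc k"
  shows "\<exists>s. mlarge {#n#} (filter (\<lambda>y. f y = s) xs)"
  using assms
proof (induction k arbitrary: xs)
  case 0
  have "xs \<noteq> []" using mlarge_nonempty 0(2) by simp
  define s where "s = f (hd xs)"
  have "\<forall>a\<in>f ` set xs. \<forall>b\<in>f ` set xs. a = b"
    by (rule card_le_Suc0_iff_eq[THEN iffD1, OF finite_imageI[OF finite_set] 0(3)])
  then have "\<forall>y\<in>set xs. f y = s"
    using hd_in_set[OF \<open>xs \<noteq> []\<close>] unfolding s_def by blast
  then have "filter (\<lambda>y. f y = s) xs = xs" by (rule filter_True)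
  then have "mlarge {#n#} (filter (\<lambda>y. f y = s) xs)" using 0(2) by simp
  then show ?case ..
next
  case (Suc k)
  define s0 where "s0 = f (hd xs)"
  define ys where "ys = filter (\<lambda>y. f y \<noteq> s0) xs"
  have "xs \<noteq> []" using mlarge_nonempty Suc.prems(2) by simp
  then have s0: "s0 \<in> f ` set xs" by (simp add: s0_def)
  have "\<forall>y\<in>set xs. 0 \<le> y" by simp
  moreover have "mbelow 0 ({#n#} + replicate_mset (Suc k) n) (replicate_mset (Suc (Suc k)) n)"
    by simp
  ultimately have "mlarge {#n#} (filter (\<lambda>y. f y = s0) xs) \<or> mlarge (replicate_mset (Suc k) n) ys"
    unfolding ys_def using mlarge_partition Suc.prems(1,2) by blast
  then show ?case
  proof
    assume ys: "mlarge (replicate_mset (Suc k) n) ys"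
    have "f ` set ys \<subseteq> f ` set xs - {s0}" unfolding ys_def by auto
    then have "card (f ` set ys) \<le> card (f ` set xs - {s0})" by (simp add: card_mono)
    also have "\<dots> = card (f ` set xs) - 1" using s0 by simp
    finally have "card (f ` set ys) \<le> Suc k" using Suc.prems(3) by simp
    moreover have "sorted_wrt (<) ys" unfolding ys_def using Suc.prems(1) by (rule sorted_wrt_filter)
    ultimately obtain s where s: "mlarge {#n#} (filter (\<lambda>y. f y = s) ys)"
      using Suc.IH ys by blast
    have "s \<noteq> s0"
    proof
      assume "s = s0"
      then have "filter (\<lambda>y. f y = s) ys = []" unfolding ys_def by (simp add: filter_filter)
      then show False using s by simp
    qed
    then have "filter (\<lambda>y. f y = s) ys = filter (\<lambda>y. f y = s) xs"
      unfolding ys_def filter_filter by (intro filter_cong) auto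
    then show ?thesis using s by auto
  qed blast
qed

lemma mset_fund:
  assumes "sorted_wrt (\<ge>) a"
  shows "sorted_wrt (\<ge>) (fund a x) \<and> mset (fund a x) = mfund (mset a) x"
proof (cases a rule: rev_cases)
  case (snoc b l)
  have b: "sorted_wrt (\<ge>) b" and l: "\<forall>u\<in>set b. l \<le> u"
    using assms snoc by (auto simp: sorted_wrt_append)
  have "mfund (mset a) x = mset a - {#l#} + (if l = 0 then {#} else replicate_mset x (l - 1))"
    by (rule mfund_eq) (use l snoc in auto)
  moreover have "sorted_wrt (\<ge>) (replicate x k)" for k :: nat
    by (induction x) auto
  ultimately show ?thesis using b l snoc by (cases l) (auto simp: sorted_wrt_append)
qed simp

lemma mset_foldl_fund:
  "sorted_wrt (\<ge>) a \<Longrightarrow> mset (foldl fund a xs) = foldl mfund (mset a) xs"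
proof (induction xs arbitrary: a)
  case (Cons x xs)
  from mset_fund[OF Cons.prems, of x]
  have sorted: "sorted_wrt (\<ge>) (fund a x)" and mset: "mset (fund a x) = mfund (mset a) x"
    by blast+
  show ?case using Cons.IH[OF sorted] mset by (simp del: fund.simps)
qed simp

lemma large_iff_mlarge:
  assumes "sorted_wrt (\<ge>) a"
  shows "large a X \<longleftrightarrow> finite X \<and> mlarge (mset a) (sorted_list_of_set X)"
proof -
  have "foldl fund a xs = [] \<longleftrightarrow> foldl mfund (mset a) xs = {#}" for xs
    unfolding mset_foldl_fund[OF assms, symmetric] by simp
  then show ?thesis unfolding large_def mlarge_def by simp
qed

lemma large_omega_pow_iff: "large (omega_pow n) X \<longleftrightarrow> finite X \<and> mlarge {#n#} (sorted_list_of_set X)"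
  using large_iff_mlarge[of "[n]"] by (simp add: omega_pow_def)

lemma large_omega_pow_Suc_homogeneous:
  assumes "large (omega_pow (Suc n)) X" and "card (g ` X) \<le> Min X"
  shows "\<exists>Y \<subseteq> X. large (omega_pow n) Y \<and> (\<forall>y\<in>Y. \<forall>y'\<in>Y. g y = g y')"
proof -
  have X: "finite X" and l: "mlarge {#Suc n#} (sorted_list_of_set X)"
    using assms(1) by (simp_all add: large_omega_pow_iff)
  then have "X \<noteq> {}" by auto
  define xs where "xs = sorted_list_of_set (X - {Min X})"
  have "sorted_list_of_set X = Min X # xs"
    unfolding xs_def using X \<open>X \<noteq> {}\<close> by (rule sorted_list_of_set_nonempty)
  then have l': "mlarge (replicate_mset (Min X) n) xs" using l by (simp add: mfund_def)
  have "0 < card (g ` X)" using X \<open>X \<noteq> {}\<close> by (simp add: card_gt_0_iff)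
  then obtain k where k: "Min X = Suc k" using assms(2) by (cases "Min X") auto
  have xs: "sorted_wrt (<) xs" "set xs \<subseteq> X" using X unfolding xs_def by auto
  then have "card (g ` set xs) \<le> card (g ` X)"
    using X by (simp add: card_mono image_mono)
  then have "card (g ` set xs) \<le> Suc k" using assms(2) k by simp
  then obtain s where s: "mlarge {#n#} (filter (\<lambda>y. g y = s) xs)"
    using mlarge_pigeonhole[OF xs(1) l'[unfolded k]] by blast
  define Y where "Y = set (filter (\<lambda>y. g y = s) xs)"
  have "sorted_list_of_set Y = filter (\<lambda>y. g y = s) xs"
    unfolding Y_def using xs(1)
    by (intro sorted_list_of_set.idem_if_sorted_distinct) (auto simp: strict_sorted_iff sorted_wrt_filter)
  then have "large (omega_pow n) Y" using s by (simp add: large_omega_pow_iff Y_def)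
  moreover have "Y \<subseteq> X" using xs(2) by (auto simp: Y_def)
  moreover have "\<forall>y\<in>Y. \<forall>y'\<in>Y. g y = g y'" by (simp add: Y_def)
  ultimately show ?thesis by blast
qed

lemma power_le_four_power_square:
  fixes c k :: nat
  assumes "k \<le> c"
  shows "c ^ k \<le> 4 ^ c\<^sup>2"
proof (cases "c = 0")
  case False
  have "c < 2 ^ c" by (rule less_exp)
  also have "(2::nat) ^ c \<le> 4 ^ c" by (rule power_mono) simp_all
  finally have "c \<le> 4 ^ c" by simp
  then have "c ^ c \<le> (4 ^ c) ^ c" by (rule power_mono) simp
  moreover have "c ^ k \<le> c ^ c" using False assms by (simp add: power_increasing)
  ultimately show ?thesis by (simp add: power2_eq_square power_mult)
qed (use assms in simp)

lemma large_subset_homogeneous_rows: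
  fixes Q :: "nat \<Rightarrow> nat \<Rightarrow> nat"
  assumes "large (omega_pow (Suc n)) X" and "4 ^ c\<^sup>2 \<le> Min X"
    and "finite Xb" and "card Xb \<le> c" and "\<And>x y. x \<in> Xb \<Longrightarrow> y \<in> X \<Longrightarrow> Q x y < c"
  shows "\<exists>Y \<subseteq> X. large (omega_pow n) Y \<and> (\<forall>x\<in>Xb. \<forall>y\<in>Y. \<forall>y'\<in>Y. Q x y = Q x y')"
proof -
  define g where "g y = (\<lambda>x\<in>Xb. Q x y)" for y
  have "g ` X \<subseteq> (\<Pi>\<^sub>E x\<in>Xb. {..<c})" using assms(5) by (auto simp: g_def)
  then have "card (g ` X) \<le> card (\<Pi>\<^sub>E x\<in>Xb. {..<c})"
    using assms(3) by (intro card_mono finite_PiE) auto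
  also have "\<dots> = c ^ card Xb" using assms(3) by (simp add: card_PiE)
  also have "\<dots> \<le> Min X" using power_le_four_power_square[OF assms(4)] assms(2) by simp
  finally obtain Y where "Y \<subseteq> X" "large (omega_pow n) Y" and Y: "\<forall>y\<in>Y. \<forall>y'\<in>Y. g y = g y'"
    using large_omega_pow_Suc_homogeneous[OF assms(1)] by blast
  moreover have "Q x y = Q x y'" if "x \<in> Xb" "y \<in> Y" "y' \<in> Y" for x y y'
    using fun_cong[OF Y[rule_format, OF that(2,3)], of x] that(1) by (simp add: g_def)
  ultimately show ?thesis by blast
qed

theorem mainTheorem17:
  fixes X :: "nat set" and n c :: nat
  assumes "finite X"
    and "large (omega_pow (n+1)) X"
    and "sparse (omega_pow 3) X"
    and "4 ^ (c^2) \<le> Min X"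
  shows "(\<forall>Xb :: nat set. \<forall>P :: nat \<Rightarrow> nat \<Rightarrow> nat.
            finite Xb \<and> card Xb \<le> c \<and> (\<forall>x\<in>Xb. \<forall>y\<in>X. x < y) \<and>
            (\<forall>x\<in>Xb \<union> X. \<forall>y\<in>Xb \<union> X. x < y \<longrightarrow> P x y < c)
            \<longrightarrow> (\<exists>Y. Y \<subseteq> X \<and> large (omega_pow n) Y \<and>
                   (\<forall>x\<in>Xb. \<forall>y\<in>Y. \<forall>y'\<in>Y. P x y = P x y')))
       \<and> (\<forall>Xb :: nat set. \<forall>P :: nat \<Rightarrow> nat \<Rightarrow> nat.
            finite Xb \<and> card Xb \<le> c \<and> (\<forall>x\<in>X. \<forall>y\<in>Xb. x < y) \<and>
            (\<forall>x\<in>X \<union> Xb. \<forall>y\<in>X \<union> Xb. x < y \<longrightarrow> P x y < c)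
            \<longrightarrow> (\<exists>Y. Y \<subseteq> X \<and> large (omega_pow n) Y \<and>
                   (\<forall>x\<in>Xb. \<forall>y\<in>Y. \<forall>y'\<in>Y. P y x = P y' x)))"
proof -
  have L: "large (omega_pow (Suc n)) X" using assms(2) by simp
  show ?thesis
  proof (intro conjI allI impI)
    fix Xb and P :: "nat \<Rightarrow> nat \<Rightarrow> nat"
    assume "finite Xb \<and> card Xb \<le> c \<and> (\<forall>x\<in>Xb. \<forall>y\<in>X. x < y) \<and>
      (\<forall>x\<in>Xb \<union> X. \<forall>y\<in>Xb \<union> X. x < y \<longrightarrow> P x y < c)"
    then have "\<exists>Y \<subseteq> X. large (omega_pow n) Y \<and> (\<forall>x\<in>Xb. \<forall>y\<in>Y. \<forall>y'\<in>Y. P x y = P x y')"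
      by (intro large_subset_homogeneous_rows[OF L assms(4)]) blast+
    then show "\<exists>Y. Y \<subseteq> X \<and> large (omega_pow n) Y \<and> (\<forall>x\<in>Xb. \<forall>y\<in>Y. \<forall>y'\<in>Y. P x y = P x y')"
      by blast
  next
    fix Xb and P :: "nat \<Rightarrow> nat \<Rightarrow> nat"
    assume "finite Xb \<and> card Xb \<le> c \<and> (\<forall>x\<in>X. \<forall>y\<in>Xb. x < y) \<and>
      (\<forall>x\<in>X \<union> Xb. \<forall>y\<in>X \<union> Xb. x < y \<longrightarrow> P x y < c)"
    then have "\<exists>Y \<subseteq> X. large (omega_pow n) Y \<and> (\<forall>x\<in>Xb. \<forall>y\<in>Y. \<forall>y'\<in>Y. P y x = P y' x)"
      by (intro large_subset_homogeneous_rows[OF L assms(4), where Q = "\<lambda>x y. P y x"]) blast+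
    then show "\<exists>Y. Y \<subseteq> X \<and> large (omega_pow n) Y \<and> (\<forall>x\<in>Xb. \<forall>y\<in>Y. \<forall>y'\<in>Y. P y x = P y' x)"
      by blast
  qed
qed

end
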